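(* Let $X$ be a bounded degree simplicial complex (with its natural metric) of finite Assouad–Nagata dimension. Then for every $q\geq 1$, ${}_s\mathrm{TO}^q_X(r) \lesssim \frac{r}{\ln(1+r)}$.
   Context: A simplicial complex is the topological realisation $\{f:S\to[0,1]:\mathrm{supp}(f)\in\mathcal S,\sum_sf(s)=1\}$ of an abstract simplicial complex $(S,\mathcal S)$; bounded degree means $S$ countable and $\max_s|\{t\ne s:\{s,t\}\in\mathcal S\}|<\infty$. Its natural metric is $d(f,f')=\inf\{\sum_{i}\|f_{i-1}-f_i\|_2: f_0=f,f_k=f',\mathrm{supp}(f_{i-1})\cup\mathrm{supp}(f_i)\in\mathcal S\}$. $|Z|$ is the number of $0$-simplices; closed simplices are sets of points whose support lies in a fixed element of $\mathcal S$; $Z\le X$ means an injection of $0$-simplices sending simplices to simplices. For finite $Z$ and continuous $f:Z\to\mathbb R^q$, ${}_s\mathrm{Ov}(f)=\max_z|\{\sigma\text{ closed simplex}: z\in f(\sigma)\}|$, ${}_s\mathrm{TO}^q(Z)=\min_f{}_s\mathrm{Ov}(f)$, ${}_s\mathrm{TO}^q_X(r)=\max\{{}_s\mathrm{TO}^q(Z):Z\le X,|Z|\le r\}$. $f\lesssim g$ means there is $C$ with $f(r)\le Cg(Cr)+C$ for all $r$. *)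

theory Defs
  imports "HOL-Analysis.Analysis"
begin

definition abs_simplicial_complex :: "'a set \<Rightarrow> 'a set set \<Rightarrow> bool" where
  "abs_simplicial_complex V K \<longleftrightarrow>
     (\<forall>\<sigma>\<in>K. finite \<sigma> \<and> \<sigma> \<noteq> {} \<and> \<sigma> \<subseteq> V) \<and>
     (\<forall>\<sigma>\<in>K. \<forall>\<tau>. \<tau> \<subseteq> \<sigma> \<and> \<tau> \<noteq> {} \<longrightarrow> \<tau> \<in> K) \<and>
     (\<forall>v\<in>V. {v} \<in> K)"

definition bounded_degree :: "'a set \<Rightarrow> 'a set set \<Rightarrow> bool" where
  "bounded_degree V K \<longleftrightarrow> countable V \<and>
     (\<exists>D::nat. \<forall>s\<in>V. finite {t. t \<noteq> s \<and> {s, t} \<in> K} \<and> card {t. t \<noteq> s \<and> {s, t} \<in> K} \<le> D)"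

definition supp :: "('a \<Rightarrow> real) \<Rightarrow> 'a set" where
  "supp f = {s. f s \<noteq> 0}"

definition realisation :: "'a set \<Rightarrow> 'a set set \<Rightarrow> ('a \<Rightarrow> real) set" where
  "realisation V K = {f. (\<forall>s. 0 \<le> f s \<and> f s \<le> 1) \<and> supp f \<in> K \<and> (\<Sum>s\<in>supp f. f s) = 1}"

definition l2dist :: "('a \<Rightarrow> real) \<Rightarrow> ('a \<Rightarrow> real) \<Rightarrow> real" where
  "l2dist f g = sqrt (\<Sum>s\<in>supp f \<union> supp g. (f s - g s)^2)"

text \<open>Natural (path) metric; infimum over admissible chains, \<infinity> if there is none.\<close>
definition nat_metric :: "'a set \<Rightarrow> 'a set set \<Rightarrow> ('a \<Rightarrow> real) \<Rightarrow> ('a \<Rightarrow> real) \<Rightarrow> ereal" where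
  "nat_metric V K f g = Inf {ereal (\<Sum>i<k. l2dist (fs i) (fs (Suc i))) | fs k.
       fs 0 = f \<and> fs k = g \<and> (\<forall>i\<le>k. fs i \<in> realisation V K) \<and>
       (\<forall>i<k. supp (fs i) \<union> supp (fs (Suc i)) \<in> K)}"

definition finite_AN_dim :: "'p set \<Rightarrow> ('p \<Rightarrow> 'p \<Rightarrow> ereal) \<Rightarrow> bool" where
  "finite_AN_dim P d \<longleftrightarrow> (\<exists>n::nat. \<exists>c::real. c > 0 \<and> (\<forall>s::real. s > 0 \<longrightarrow>
     (\<exists>\<U>. \<Union>\<U> = P \<and>
        (\<forall>U\<in>\<U>. \<forall>x\<in>U. \<forall>y\<in>U. d x y \<le> ereal (c * s)) \<and>
        (\<forall>x\<in>P. finite {U\<in>\<U>. \<exists>y\<in>U. d x y < ereal s} \<and>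
                 card {U\<in>\<U>. \<exists>y\<in>U. d x y < ereal s} \<le> n + 1))))"

definition closed_simplex :: "'a set \<Rightarrow> 'a set set \<Rightarrow> 'a set \<Rightarrow> ('a \<Rightarrow> real) set" where
  "closed_simplex V K \<sigma> = {x \<in> realisation V K. supp x \<subseteq> \<sigma>}"

definition s_Ov :: "'a set \<Rightarrow> 'a set set \<Rightarrow> (('a \<Rightarrow> real) \<Rightarrow> real ^ 'q::finite) \<Rightarrow> nat" where
  "s_Ov W Z f = Max ((\<lambda>z. card {\<sigma>\<in>Z. z \<in> f ` closed_simplex W Z \<sigma>}) ` UNIV)"

text \<open>For finite Z the
  realisation lies in the finite-dimensional space of functions supported in W, where the
  product topology agrees with the topology of the natural metric.\<close>
definition s_TO :: "'q::finite itself \<Rightarrow> 'a set \<Rightarrow> 'a set set \<Rightarrow> nat" where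
  "s_TO _ W Z = Inf {s_Ov W Z f | f :: ('a \<Rightarrow> real) \<Rightarrow> real ^ 'q.
                       continuous_on (realisation W Z) f}"

definition subcomplex_le :: "'b set \<Rightarrow> 'b set set \<Rightarrow> 'a set \<Rightarrow> 'a set set \<Rightarrow> bool" where
  "subcomplex_le W Z V K \<longleftrightarrow> abs_simplicial_complex W Z \<and>
     (\<exists>\<phi>. inj_on \<phi> W \<and> \<phi> ` W \<subseteq> V \<and> (\<forall>\<sigma>\<in>Z. \<phi> ` \<sigma> \<in> K))"

text \<open>sTO^q_X(r): maximum over finite Z \<le> X with at most r vertices
  (Z is taken with vertices in the same type as X, no loss since Z injects into X).\<close>
definition s_TO_X :: "'q::finite itself \<Rightarrow> 'a set \<Rightarrow> 'a set set \<Rightarrow> nat \<Rightarrow> nat" where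
  "s_TO_X q V K r = Sup {s_TO q W Z | (W::'a set) Z. finite W \<and> card W \<le> r \<and> subcomplex_le W Z V K}"

end

theory Submission
  imports Defs
begin

text \<open>A finite subcomplex \<open>Z \<le> X\<close> is mapped to \<open>\<real>^q\<close> by the colour map
  \<open>x \<mapsto> (\<Sum>\<^sub>w x\<^sub>w \<kappa>(w), \<dots>, \<Sum>\<^sub>w x\<^sub>w \<kappa>(w))\<close> of a colouring \<open>\<kappa>\<close> of its vertices. A simplex
  without bichromatic edges goes to a single point, so if all degrees are at most \<open>D\<close> the
  overlap is at most \<open>2^(D + 1)\<close> times the sum of the size of the largest colour class and
  the number of boundary vertices (endpoints of bichromatic edges).

  Good colourings come from Assouad--Nagata covers. The graph metric of the 1-skeleton is
  comparable to the natural metric, so for every \<open>T\<close> the vertices are covered by sets of graph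
  diameter \<open>O(T)\<close> such that every graph ball of radius \<open>T + 1\<close> meets at most \<open>n + 1\<close> of them.
  Colour each vertex by the first of these sets (in a fixed enumeration) within graph distance
  \<open>t\<close>. A vertex is a boundary vertex only at the two times around its entry into the
  \<open>t\<close>-neighbourhood of one of the sets near it, so for some \<open>t \<le> T\<close> there are at most
  \<open>2(n + 1)|Z|/(T + 1)\<close> boundary vertices, while every colour class lies in a graph ball of
  radius \<open>O(T)\<close> and has \<open>(D + 1)^O(T)\<close> vertices. Taking \<open>T \<approx> \<epsilon> ln r\<close> makes both terms
  \<open>O(r / ln r)\<close>.\<close>

definition vertex_point :: "'a \<Rightarrow> 'a \<Rightarrow> real" where
  "vertex_point a = (\<lambda>s. if s = a then 1 else 0)"

lemma supp_vertex_point [simp]: "supp (vertex_point a) = {a}"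
  by (auto simp: supp_def vertex_point_def)

lemma l2dist_vertex_points_le: "l2dist (vertex_point a) (vertex_point b) \<le> sqrt 2"
  by (cases "a = b") (simp_all only: l2dist_def supp_vertex_point, simp_all add: vertex_point_def)

lemma l2dist_nonneg: "0 \<le> l2dist f g"
  by (simp add: l2dist_def sum_nonneg)

lemma coordinate_diff_le_l2dist:
  assumes "finite (supp f \<union> supp g)"
  shows "\<bar>f w - g w\<bar> \<le> l2dist f g"
proof (cases "w \<in> supp f \<union> supp g")
  case True
  have "(f w - g w)\<^sup>2 \<le> (\<Sum>s\<in>supp f \<union> supp g. (f s - g s)\<^sup>2)"
    by (rule member_le_sum[OF True _ assms]) simp
  then show ?thesis
    unfolding l2dist_def by (metis real_sqrt_abs real_sqrt_le_mono)
next
  case False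
  then show ?thesis using l2dist_nonneg by (simp add: supp_def)
qed

definition neighbours :: "'a set set \<Rightarrow> 'a \<Rightarrow> 'a set" where
  "neighbours K s = {t. t \<noteq> s \<and> {s, t} \<in> K}"

text \<open>Since \<open>{v, v} = {v}\<close> is a simplex, a path
  may pause at a vertex, so this says that the graph distance is at most \<open>m\<close>.\<close>
inductive joined_within :: "'a set \<Rightarrow> 'a set set \<Rightarrow> nat \<Rightarrow> 'a \<Rightarrow> 'a \<Rightarrow> bool" for V K where
  start: "u \<in> V \<Longrightarrow> joined_within V K 0 u u"
| step: "joined_within V K m u w \<Longrightarrow> {w, v} \<in> K \<Longrightarrow> joined_within V K (Suc m) u v"

locale simplicial_complex =
  fixes V :: "'a set" and K :: "'a set set"
  assumes abs_simplicial_complex: "abs_simplicial_complex V K"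
begin

lemma simplex_finite: "\<sigma> \<in> K \<Longrightarrow> finite \<sigma>"
  and simplex_nonempty: "\<sigma> \<in> K \<Longrightarrow> \<sigma> \<noteq> {}"
  and simplex_subset: "\<sigma> \<in> K \<Longrightarrow> \<sigma> \<subseteq> V"
  and face_simplex: "\<sigma> \<in> K \<Longrightarrow> \<tau> \<subseteq> \<sigma> \<Longrightarrow> \<tau> \<noteq> {} \<Longrightarrow> \<tau> \<in> K"
  and vertex_simplex: "a \<in> V \<Longrightarrow> {a} \<in> K"
  using abs_simplicial_complex unfolding abs_simplicial_complex_def by blast+

lemma edge_vertices: "{a, b} \<in> K \<Longrightarrow> a \<in> V \<and> b \<in> V"
  using simplex_subset by blast

lemma finite_supp_realisation: "f \<in> realisation V K \<Longrightarrow> finite (supp f)"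
  by (simp add: realisation_def simplex_finite)

lemma vertex_point_in_realisation: "a \<in> V \<Longrightarrow> vertex_point a \<in> realisation V K"
  by (simp add: realisation_def vertex_simplex) (simp add: vertex_point_def)

lemma joined_within_vertices: "joined_within V K m u v \<Longrightarrow> u \<in> V \<and> v \<in> V"
  by (induction rule: joined_within.induct) (auto dest: edge_vertices)

lemma joined_within_Suc: "joined_within V K m u v \<Longrightarrow> joined_within V K (Suc m) u v"
  using joined_within.step joined_within_vertices vertex_simplex by fastforce

lemma joined_within_mono:
  assumes "joined_within V K m u v" and "m \<le> m'"
  shows "joined_within V K m' u v"
  using assms(2,1) by (induction m' rule: dec_induct) (auto intro: joined_within_Suc)

lemma joined_within_Cons:
  "joined_within V K m w v \<Longrightarrow> {u, w} \<in> K \<Longrightarrow> joined_within V K (Suc m) u v"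
proof (induction rule: joined_within.induct)
  case (start w)
  then show ?case by (meson edge_vertices joined_within.start joined_within.step)
qed (auto intro: joined_within.step)

lemma joined_within_sym: "joined_within V K m u v \<Longrightarrow> joined_within V K m v u"
  by (induction rule: joined_within.induct)
    (auto intro: joined_within.start joined_within_Cons simp: insert_commute)

lemma joined_within_trans:
  assumes "joined_within V K m u w" and "joined_within V K m' w v"
  shows "joined_within V K (m + m') u v"
  using assms(2,1) by (induction m' w v rule: joined_within.induct) (auto intro: joined_within.step)

lemma joined_within_path:
  assumes "joined_within V K m u v"
  shows "\<exists>p. p 0 = u \<and> p m = v \<and> (\<forall>i\<le>m. p i \<in> V) \<and> (\<forall>i<m. {p i, p (Suc i)} \<in> K)"
  using assms
proof (induction rule: joined_within.induct)
  case (start u)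
  then show ?case by (intro exI[of _ "\<lambda>_. u"]) simp
next
  case (step m u w v)
  then obtain p where p: "p 0 = u" "p m = w" "\<forall>i\<le>m. p i \<in> V" "\<forall>i<m. {p i, p (Suc i)} \<in> K"
    by blast
  have "v \<in> V" using step.hyps(2) edge_vertices by blast
  then show ?case using p step.hyps(2)
    by (intro exI[of _ "p(Suc m := v)"]) (auto simp: le_Suc_eq less_Suc_eq)
qed

lemma card_simplices_containing_le:
  assumes "finite (neighbours K a)" and "card (neighbours K a) \<le> d"
  shows "card {\<sigma>\<in>K. a \<in> \<sigma>} \<le> 2 ^ (d + 1)"
proof -
  have "{\<sigma>\<in>K. a \<in> \<sigma>} \<subseteq> Pow (insert a (neighbours K a))"
  proof safe
    fix \<sigma> b assume "\<sigma> \<in> K" "a \<in> \<sigma>" "b \<in> \<sigma>" "b \<notin> neighbours K a"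
    then show "b = a" using face_simplex[of \<sigma> "{a, b}"] by (auto simp: neighbours_def)
  qed
  then have "card {\<sigma>\<in>K. a \<in> \<sigma>} \<le> card (Pow (insert a (neighbours K a)))"
    by (intro card_mono) (simp_all add: assms)
  also have "\<dots> \<le> 2 ^ (card (neighbours K a) + 1)"
    by (simp add: assms card_Pow card_insert_le_m1 card_insert_if)
  also have "\<dots> \<le> 2 ^ (d + 1)" using assms(2) by (intro power_increasing) simp_all
  finally show ?thesis .
qed

section \<open>Graph distance versus the natural metric\<close>

lemma nat_metric_vertex_points_le:
  assumes "joined_within V K m u v"
  shows "nat_metric V K (vertex_point u) (vertex_point v) \<le> ereal (real m * sqrt 2)"
proof -
  obtain p where p: "p 0 = u" "p m = v" "\<forall>i\<le>m. p i \<in> V" "\<forall>i<m. {p i, p (Suc i)} \<in> K"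
    using joined_within_path[OF assms] by blast
  define fs where "fs i = vertex_point (p i)" for i
  have "nat_metric V K (vertex_point u) (vertex_point v) \<le> ereal (\<Sum>i<m. l2dist (fs i) (fs (Suc i)))"
    unfolding nat_metric_def
  proof (rule Inf_lower, intro CollectI exI conjI)
    show "\<forall>i\<le>m. fs i \<in> realisation V K" "\<forall>i<m. supp (fs i) \<union> supp (fs (Suc i)) \<in> K"
      using p(3,4) by (auto simp: fs_def vertex_point_in_realisation insert_commute)
  qed (auto simp: fs_def p)
  also have "\<dots> \<le> ereal (real m * sqrt 2)"
    using sum_mono[of "{..<m}" "\<lambda>i. l2dist (fs i) (fs (Suc i))" "\<lambda>_. sqrt 2"]
    by (simp add: fs_def l2dist_vertex_points_le)
  finally show ?thesis .
qed

lemma coordinate_diff_le_chain_length: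
  assumes "\<forall>l\<le>j. fs l \<in> realisation V K" and "i \<le> j"
  shows "\<bar>fs i w - fs j w\<bar> \<le> (\<Sum>l=i..<j. l2dist (fs l) (fs (Suc l)))"
  using assms(2,1)
proof (induction j rule: dec_induct)
  case (step j)
  have "\<bar>fs j w - fs (Suc j) w\<bar> \<le> l2dist (fs j) (fs (Suc j))"
    using step.prems by (intro coordinate_diff_le_l2dist) (simp add: finite_supp_realisation)
  then show ?case using step by simp
qed simp

end

locale bounded_degree_complex = simplicial_complex +
  fixes D :: nat
  assumes finite_neighbours: "s \<in> V \<Longrightarrow> finite (neighbours K s)"
    and card_neighbours_le: "s \<in> V \<Longrightarrow> card (neighbours K s) \<le> D"
begin

lemma card_simplex_le: "\<sigma> \<in> K \<Longrightarrow> card \<sigma> \<le> D + 1"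
proof -
  assume \<sigma>: "\<sigma> \<in> K"
  then obtain a where a: "a \<in> \<sigma>" using simplex_nonempty by blast
  then have "a \<in> V" using \<sigma> simplex_subset by blast
  have "\<sigma> \<subseteq> insert a (neighbours K a)"
  proof
    fix b assume "b \<in> \<sigma>"
    then have "{a, b} \<in> K" using \<sigma> a face_simplex[of \<sigma> "{a, b}"] by blast
    then show "b \<in> insert a (neighbours K a)" by (auto simp: neighbours_def)
  qed
  then have "card \<sigma> \<le> card (insert a (neighbours K a))"
    by (intro card_mono) (simp_all add: finite_neighbours \<open>a \<in> V\<close>)
  also have "\<dots> \<le> D + 1"
    using card_neighbours_le[OF \<open>a \<in> V\<close>]
    by (simp add: card_insert_if finite_neighbours \<open>a \<in> V\<close>)
  finally show ?thesis .
qed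

lemma realisation_heavy_vertex:
  assumes "f \<in> realisation V K"
  shows "\<exists>w. 1 / (real D + 1) \<le> f w"
proof (rule ccontr)
  assume "\<nexists>w. 1 / (real D + 1) \<le> f w"
  then have light: "f w < 1 / (real D + 1)" for w by (simp add: not_le)
  have simplex: "supp f \<in> K" and sum1: "(\<Sum>s\<in>supp f. f s) = 1"
    using assms by (auto simp: realisation_def)
  have "(\<Sum>s\<in>supp f. f s) < (\<Sum>s\<in>supp f. 1 / (real D + 1))"
    using simplex simplex_finite simplex_nonempty light by (intro sum_strict_mono) auto
  also have "\<dots> \<le> 1"
    using card_simplex_le[OF simplex] by (simp add: divide_simps)
  finally show False using sum1 by simp
qed

lemma chain_consecutive_edge:
  assumes "\<forall>l<k. supp (fs l) \<union> supp (fs (Suc l)) \<in> K" and "l < k"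
    and "0 < fs l w" and "0 < fs (Suc l) w'"
  shows "{w, w'} \<in> K"
proof -
  have "{w, w'} \<subseteq> supp (fs l) \<union> supp (fs (Suc l))"
    using assms(3,4) by (auto simp: supp_def)
  moreover have "supp (fs l) \<union> supp (fs (Suc l)) \<in> K" using assms(1,2) by blast
  ultimately show ?thesis using face_simplex by blast
qed

text \<open>Follow a vertex of weight at least \<open>\<alpha> = 1/(D+1)\<close> along the chain until its weight
  first drops to \<open>\<alpha>/2\<close>. This part of the chain has length at least \<open>\<alpha>/2\<close>, and at its end
  the vertex is adjacent to a vertex of weight at least \<open>\<alpha>\<close> of the current point.\<close>
lemma joined_within_of_chain:
  assumes R: "\<forall>l\<le>k. fs l \<in> realisation V K"
    and E: "\<forall>l<k. supp (fs l) \<union> supp (fs (Suc l)) \<in> K"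
    and last: "fs k = vertex_point v"
    and "i \<le> k" and "1 / (real D + 1) \<le> fs i w"
  shows "\<exists>m. joined_within V K m w v \<and>
           real m \<le> 2 * (real D + 1) * (\<Sum>l=i..<k. l2dist (fs l) (fs (Suc l))) + 1"
  using assms(4,5)
proof (induction "k - i" arbitrary: i w rule: less_induct)
  case less
  define \<alpha> where "\<alpha> = 1 / (real D + 1)"
  define L where "L i = (\<Sum>l=i..<k. l2dist (fs l) (fs (Suc l)))" for i
  have "\<alpha> > 0" and heavy: "\<alpha> \<le> fs i w" using less.prems(2) by (simp_all add: \<alpha>_def)
  show ?case
  proof (cases "\<exists>j. i < j \<and> j \<le> k \<and> fs j w \<le> \<alpha> / 2")
    case False
    have "\<alpha> / 2 < fs k w" if "i \<noteq> k"
    proof -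
      have "i < k" using that less.prems(1) by simp
      then show ?thesis using False by auto
    qed
    then have "fs k w > 0" using heavy \<open>\<alpha> > 0\<close> by (cases "i = k") auto
    then have "w = v" using last by (simp add: vertex_point_def split: if_splits)
    have "fs k \<in> realisation V K" using R by blast
    then have "supp (fs k) \<in> K" by (simp add: realisation_def)
    then have "v \<in> V" using last simplex_subset by force
    then have "joined_within V K 0 w v" using \<open>w = v\<close> joined_within.start by simp
    moreover have "real 0 \<le> 2 * (real D + 1) * L i + 1" by (simp add: L_def sum_nonneg l2dist_nonneg)
    ultimately show ?thesis unfolding L_def by blast
  next
    case True
    then obtain j where j: "i < j" "j \<le> k" "fs j w \<le> \<alpha> / 2"
      and before: "\<And>l. l < j \<Longrightarrow> \<not> (i < l \<and> l \<le> k \<and> fs l w \<le> \<alpha> / 2)"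
      using exists_least_iff[of "\<lambda>j. i < j \<and> j \<le> k \<and> fs j w \<le> \<alpha> / 2"] by blast
    obtain l where "j = Suc l" using j(1) by (cases j) auto
    then have "i \<le> l" "l < k" using j by simp_all
    obtain w' where w': "\<alpha> \<le> fs j w'"
      using realisation_heavy_vertex R j(2) unfolding \<alpha>_def by blast
    have "k - j < k - i" using j by linarith
    then obtain m where m: "joined_within V K m w' v" "real m \<le> 2 * (real D + 1) * L j + 1"
      using less.hyps[of j w'] j w' unfolding \<alpha>_def L_def by auto
    have "fs l w > 0"
    proof (cases "l = i")
      case False
      then have "\<alpha> / 2 < fs l w" using before[of l] \<open>j = Suc l\<close> \<open>i \<le> l\<close> \<open>l < k\<close> by simp
      then show ?thesis using \<open>\<alpha> > 0\<close> by linarith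
    qed (use heavy \<open>\<alpha> > 0\<close> in simp)
    moreover have "fs (Suc l) w' > 0" using w' \<open>\<alpha> > 0\<close> \<open>j = Suc l\<close> by simp
    ultimately have "{w, w'} \<in> K" using chain_consecutive_edge[OF E \<open>l < k\<close>] by blast
    then have joined: "joined_within V K (Suc m) w v" using joined_within_Cons m(1) by blast
    have "\<alpha> / 2 \<le> \<bar>fs i w - fs j w\<bar>" using heavy j(3) by linarith
    also have "\<dots> \<le> (\<Sum>l=i..<j. l2dist (fs l) (fs (Suc l)))"
      using R j by (intro coordinate_diff_le_chain_length) auto
    finally have "1 \<le> 2 * (real D + 1) * (\<Sum>l=i..<j. l2dist (fs l) (fs (Suc l)))"
      by (simp add: \<alpha>_def field_simps)
    moreover have "L i = (\<Sum>l=i..<j. l2dist (fs l) (fs (Suc l))) + L j"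
      unfolding L_def using j by (simp add: sum.atLeastLessThan_concat)
    ultimately have "real (Suc m) \<le> 2 * (real D + 1) * L i + 1"
      using m(2) by (simp add: algebra_simps)
    then have "real (Suc m) \<le> 2 * (real D + 1) * (\<Sum>l=i..<k. l2dist (fs l) (fs (Suc l))) + 1"
      by (simp only: L_def)
    with joined show ?thesis by blast
  qed
qed

lemma joined_within_of_nat_metric_le:
  assumes "u \<in> V" and "nat_metric V K (vertex_point u) (vertex_point v) \<le> ereal L"
  shows "joined_within V K (nat \<lceil>2 * (real D + 1) * (L + 1) + 1\<rceil>) u v"
proof -
  have "nat_metric V K (vertex_point u) (vertex_point v) < ereal (L + 1)"
    using assms(2) by (rule le_less_trans) simp
  then obtain fs k where fs: "fs 0 = vertex_point u" "fs k = vertex_point v"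
      "\<forall>i\<le>k. fs i \<in> realisation V K" "\<forall>i<k. supp (fs i) \<union> supp (fs (Suc i)) \<in> K"
    and short: "(\<Sum>i<k. l2dist (fs i) (fs (Suc i))) < L + 1"
    unfolding nat_metric_def Inf_less_iff by auto
  obtain m where m: "joined_within V K m u v"
      "real m \<le> 2 * (real D + 1) * (\<Sum>l=0..<k. l2dist (fs l) (fs (Suc l))) + 1"
    using joined_within_of_chain[OF fs(3,4,2), of 0 u] fs(1) by (auto simp: vertex_point_def)
  have "2 * (real D + 1) * (\<Sum>l=0..<k. l2dist (fs l) (fs (Suc l))) \<le> 2 * (real D + 1) * (L + 1)"
    using short by (intro mult_left_mono) (simp_all add: atLeast0LessThan)
  then have "real m \<le> 2 * (real D + 1) * (L + 1) + 1"
    using m(2) by linarith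
  then have "m \<le> nat \<lceil>2 * (real D + 1) * (L + 1) + 1\<rceil>" by linarith
  then show ?thesis using joined_within_mono[OF m(1)] by blast
qed

lemma card_joined_within_le:
  "finite {v. joined_within V K m x v} \<and> card {v. joined_within V K m x v} \<le> (D + 1) ^ m"
proof (induction m)
  case 0
  have "{v. joined_within V K 0 x v} \<subseteq> {x}"
  proof
    fix v assume "v \<in> {v. joined_within V K 0 x v}"
    then have "joined_within V K 0 x v" by simp
    then show "v \<in> {x}" by (cases rule: joined_within.cases) simp_all
  qed
  then show ?case using card_mono[of "{x}"] by (auto intro: finite_subset)
next
  case (Suc m)
  let ?B = "{v. joined_within V K m x v}"
  let ?N = "\<lambda>y. insert y (neighbours K y)"
  have sub: "{v. joined_within V K (Suc m) x v} \<subseteq> (\<Union>y\<in>?B. ?N y)"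
  proof
    fix v assume "v \<in> {v. joined_within V K (Suc m) x v}"
    then have "joined_within V K (Suc m) x v" by simp
    then obtain y where "joined_within V K m x y" "{y, v} \<in> K"
      by (cases rule: joined_within.cases) simp_all
    then show "v \<in> (\<Union>y\<in>?B. ?N y)" by (auto simp: neighbours_def)
  qed
  have N: "finite (?N y) \<and> card (?N y) \<le> D + 1" if "y \<in> ?B" for y
  proof -
    have "y \<in> V" using that joined_within_vertices by blast
    then show ?thesis
      using finite_neighbours[of y] card_neighbours_le[of y] by (simp add: card_insert_if)
  qed
  have finite_union: "finite (\<Union>y\<in>?B. ?N y)"
    by (rule finite_UN_I) (use Suc.IH N in auto)
  have "card {v. joined_within V K (Suc m) x v} \<le> card (\<Union>y\<in>?B. ?N y)"
    by (rule card_mono[OF finite_union sub])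
  also have "\<dots> \<le> (\<Sum>y\<in>?B. card (?N y))"
    by (rule card_UN_le) (use Suc.IH in blast)
  also have "\<dots> \<le> (\<Sum>y\<in>?B. D + 1)"
    by (rule sum_mono) (use N in blast)
  also have "\<dots> = card ?B * (D + 1)" by simp
  also have "\<dots> \<le> (D + 1) ^ m * (D + 1)"
    using Suc.IH by (intro mult_right_mono) simp_all
  finally show ?case using finite_subset[OF sub finite_union] by (simp add: mult.commute)
qed

end

section \<open>Overlap of colouring maps\<close>

definition boundary_vertices :: "'a set \<Rightarrow> 'a set set \<Rightarrow> ('a \<Rightarrow> 'c) \<Rightarrow> 'a set" where
  "boundary_vertices V K \<kappa> = {a\<in>V. \<exists>b\<in>V. {a, b} \<in> K \<and> \<kappa> a \<noteq> \<kappa> b}"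

definition colour_map :: "'a set \<Rightarrow> ('a \<Rightarrow> nat) \<Rightarrow> ('a \<Rightarrow> real) \<Rightarrow> real ^ 'q::finite" where
  "colour_map V \<kappa> x = (\<chi> i. \<Sum>w\<in>V. x w * real (\<kappa> w))"

lemma continuous_on_colour_map: "continuous_on A (colour_map V \<kappa>)"
  unfolding colour_map_def
  by (intro continuous_on_vec_lambda continuous_on_sum continuous_on_mult_right
      continuous_on_subset[OF continuous_on_product_coordinates]) simp

lemma s_TO_le_s_Ov:
  fixes f :: "('a \<Rightarrow> real) \<Rightarrow> real ^ 'q::finite"
  assumes "continuous_on (realisation W Z) f"
  shows "s_TO TYPE('q) W Z \<le> s_Ov W Z f"
  unfolding s_TO_def Inf_nat_def using assms by (intro Least_le) blast

lemma s_Ov_le: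
  assumes "finite Z" and "\<And>z. card {\<sigma>\<in>Z. z \<in> f ` closed_simplex W Z \<sigma>} \<le> B"
  shows "s_Ov W Z f \<le> B"
proof -
  let ?I = "(\<lambda>z. card {\<sigma>\<in>Z. z \<in> f ` closed_simplex W Z \<sigma>}) ` UNIV"
  have "?I \<subseteq> {..card Z}"
    using assms(1) by (auto intro: card_mono)
  then have "finite ?I" by (rule finite_subset) simp
  then show ?thesis
    unfolding s_Ov_def using assms(2) by (simp add: Max_le_iff)
qed

context simplicial_complex
begin

lemma finite_simplices: "finite V \<Longrightarrow> finite K"
  using simplex_subset by (meson Pow_iff finite_Pow_iff rev_finite_subset subsetI)

lemma colour_map_closed_simplex:
  assumes "finite V" and \<sigma>: "\<sigma> \<in> K" and "\<sigma> \<inter> boundary_vertices V K \<kappa> = {}" and "a \<in> \<sigma>"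
    and x: "x \<in> closed_simplex V K \<sigma>"
  shows "colour_map V \<kappa> x $ i = real (\<kappa> a)"
proof -
  have monochromatic: "\<kappa> b = \<kappa> a" if "b \<in> \<sigma>" for b
  proof (cases "b = a")
    case False
    have "{a, b} \<in> K" using face_simplex[OF \<sigma>, of "{a, b}"] that \<open>a \<in> \<sigma>\<close> by blast
    moreover have "a \<notin> boundary_vertices V K \<kappa>" "a \<in> V" "b \<in> V"
      using assms(3,4) that simplex_subset[OF \<sigma>] by auto
    ultimately show ?thesis by (auto simp: boundary_vertices_def)
  qed simp
  have supp: "supp x \<subseteq> \<sigma>" and sum1: "(\<Sum>s\<in>supp x. x s) = 1"
    using x by (auto simp: closed_simplex_def realisation_def)
  have "(\<Sum>w\<in>V. x w * real (\<kappa> w)) = (\<Sum>w\<in>V. x w * real (\<kappa> a))"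
  proof (rule sum.cong[OF refl])
    fix w
    show "x w * real (\<kappa> w) = x w * real (\<kappa> a)"
    proof (cases "x w = 0")
      case False
      then have "w \<in> \<sigma>" using supp by (auto simp: supp_def)
      then show ?thesis using monochromatic by simp
    qed simp
  qed
  also have "\<dots> = (\<Sum>w\<in>V. x w) * real (\<kappa> a)" by (simp add: sum_distrib_right)
  also have "(\<Sum>w\<in>V. x w) = (\<Sum>s\<in>supp x. x s)"
    using supp simplex_subset[OF \<sigma>] assms(1)
    by (intro sum.mono_neutral_right) (auto simp: supp_def)
  finally show ?thesis using sum1 by (simp add: colour_map_def)
qed

lemma card_simplices_image_colour_map_le:
  fixes \<kappa> :: "'a \<Rightarrow> nat" and z :: "real ^ 'q::finite"
  assumes "finite V" and degree: "\<And>a. a \<in> V \<Longrightarrow> card (neighbours K a) \<le> D"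
    and colour_class: "\<And>k. card {w\<in>V. \<kappa> w = k} \<le> P"
  shows "card {\<sigma>\<in>K. z \<in> colour_map V \<kappa> ` closed_simplex V K \<sigma>}
           \<le> 2 ^ (D + 1) * (P + card (boundary_vertices V K \<kappa>))"
proof -
  define bd where "bd = boundary_vertices V K \<kappa>"
  define i :: 'q where "i = undefined"
  define A where "A = {w\<in>V. real (\<kappa> w) = z $ i} \<union> bd"
  have "finite A" using \<open>finite V\<close> by (simp add: A_def bd_def boundary_vertices_def)
  have "card {w\<in>V. real (\<kappa> w) = z $ i} \<le> P"
  proof (cases "\<exists>w\<in>V. real (\<kappa> w) = z $ i")
    case True
    then obtain w0 where "w0 \<in> V" "real (\<kappa> w0) = z $ i" by blast
    then have "{w\<in>V. real (\<kappa> w) = z $ i} = {w\<in>V. \<kappa> w = \<kappa> w0}" by auto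
    then show ?thesis using colour_class by simp
  next
    case False
    then have "{w\<in>V. real (\<kappa> w) = z $ i} = {}" by auto
    then show ?thesis by (metis card.empty le0)
  qed
  then have "card A \<le> P + card bd"
    unfolding A_def using card_Un_le[of "{w\<in>V. real (\<kappa> w) = z $ i}" bd] by linarith
  have "{\<sigma>\<in>K. z \<in> colour_map V \<kappa> ` closed_simplex V K \<sigma>} \<subseteq> (\<Union>a\<in>A. {\<sigma>\<in>K. a \<in> \<sigma>})"
  proof
    fix \<sigma> assume "\<sigma> \<in> {\<sigma>\<in>K. z \<in> colour_map V \<kappa> ` closed_simplex V K \<sigma>}"
    then obtain x where \<sigma>: "\<sigma> \<in> K" and x: "x \<in> closed_simplex V K \<sigma>" and "z = colour_map V \<kappa> x"
      by blast
    show "\<sigma> \<in> (\<Union>a\<in>A. {\<sigma>\<in>K. a \<in> \<sigma>})"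
    proof (cases "\<sigma> \<inter> bd = {}")
      case True
      obtain a where "a \<in> \<sigma>" using simplex_nonempty[OF \<sigma>] by blast
      then have "z $ i = real (\<kappa> a)"
        using colour_map_closed_simplex[OF \<open>finite V\<close> \<sigma> _ _ x] True \<open>z = colour_map V \<kappa> x\<close>
        by (simp add: bd_def)
      moreover have "a \<in> V" using \<open>a \<in> \<sigma>\<close> simplex_subset[OF \<sigma>] by blast
      ultimately have "a \<in> A" by (simp add: A_def)
      then show ?thesis using \<sigma> \<open>a \<in> \<sigma>\<close> by blast
    qed (use \<sigma> A_def in blast)
  qed
  then have "card {\<sigma>\<in>K. z \<in> colour_map V \<kappa> ` closed_simplex V K \<sigma>} \<le> card (\<Union>a\<in>A. {\<sigma>\<in>K. a \<in> \<sigma>})"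
    by (intro card_mono) (simp_all add: \<open>finite A\<close> finite_simplices \<open>finite V\<close>)
  also have "\<dots> \<le> (\<Sum>a\<in>A. card {\<sigma>\<in>K. a \<in> \<sigma>})" by (rule card_UN_le[OF \<open>finite A\<close>])
  also have "\<dots> \<le> (\<Sum>a\<in>A. 2 ^ (D + 1))"
  proof (rule sum_mono)
    fix a assume "a \<in> A"
    then have "a \<in> V" by (auto simp: A_def bd_def boundary_vertices_def)
    have "finite (neighbours K a)"
      using \<open>finite V\<close> edge_vertices by (auto simp: neighbours_def intro: finite_subset)
    then show "card {\<sigma>\<in>K. a \<in> \<sigma>} \<le> 2 ^ (D + 1)"
      using degree[OF \<open>a \<in> V\<close>] by (rule card_simplices_containing_le)
  qed
  also have "\<dots> \<le> 2 ^ (D + 1) * (P + card bd)"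
    using \<open>card A \<le> P + card bd\<close> by (simp add: mult.commute)
  finally show ?thesis by (simp add: bd_def)
qed

lemma s_TO_le_colouring:
  fixes \<kappa> :: "'a \<Rightarrow> nat"
  assumes "finite V" and "\<And>a. a \<in> V \<Longrightarrow> card (neighbours K a) \<le> D"
    and "\<And>k. card {w\<in>V. \<kappa> w = k} \<le> P"
  shows "s_TO TYPE('q::finite) V K \<le> 2 ^ (D + 1) * (P + card (boundary_vertices V K \<kappa>))"
proof -
  have "s_TO TYPE('q) V K \<le> s_Ov V K (colour_map V \<kappa> :: _ \<Rightarrow> real ^ 'q)"
    by (intro s_TO_le_s_Ov continuous_on_colour_map)
  also have "\<dots> \<le> 2 ^ (D + 1) * (P + card (boundary_vertices V K \<kappa>))"
    using assms by (intro s_Ov_le finite_simplices card_simplices_image_colour_map_le)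
  finally show ?thesis .
qed

end

section \<open>Colourings from Assouad--Nagata covers\<close>

definition near :: "'a set \<Rightarrow> 'a set set \<Rightarrow> 'a set \<Rightarrow> 'a \<Rightarrow> nat \<Rightarrow> bool" where
  "near V K U x t \<longleftrightarrow> (\<exists>y\<in>U. joined_within V K t x y)"

definition entry_time :: "'a set \<Rightarrow> 'a set set \<Rightarrow> 'a set \<Rightarrow> 'a \<Rightarrow> nat" where
  "entry_time V K U x = (LEAST t. near V K U x t)"

definition first_near :: "'a set \<Rightarrow> 'a set set \<Rightarrow> 'a set list \<Rightarrow> nat \<Rightarrow> 'a \<Rightarrow> nat" where
  "first_near V K Us t x = (LEAST i. i < length Us \<and> near V K (Us ! i) x t)"

text \<open>The graph counterpart of the covers in \<open>finite_AN_dim\<close>: sets of graph diameter at most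
  \<open>M\<close> covering \<open>V\<close> such that every graph ball of radius \<open>r\<close> meets at most \<open>N\<close> of them.\<close>
definition AN_cover :: "'a set \<Rightarrow> 'a set set \<Rightarrow> 'a set set \<Rightarrow> nat \<Rightarrow> nat \<Rightarrow> nat \<Rightarrow> bool" where
  "AN_cover V K \<U> M r N \<longleftrightarrow> (\<forall>x\<in>V. \<exists>U\<in>\<U>. x \<in> U) \<and>
     (\<forall>U\<in>\<U>. \<forall>y\<in>U. \<forall>y'\<in>U. joined_within V K M y y') \<and>
     (\<forall>x\<in>V. finite {U\<in>\<U>. near V K U x r} \<and> card {U\<in>\<U>. near V K U x r} \<le> N)"

lemma AN_coverD:
  assumes "AN_cover V K \<U> M r N"
  shows AN_cover_covers: "x \<in> V \<Longrightarrow> \<exists>U\<in>\<U>. x \<in> U"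
    and AN_cover_diameter: "U \<in> \<U> \<Longrightarrow> y \<in> U \<Longrightarrow> y' \<in> U \<Longrightarrow> joined_within V K M y y'"
    and AN_cover_finite: "x \<in> V \<Longrightarrow> finite {U\<in>\<U>. near V K U x r}"
    and AN_cover_card_le: "x \<in> V \<Longrightarrow> card {U\<in>\<U>. near V K U x r} \<le> N"
  using assms unfolding AN_cover_def by blast+

lemma first_near_differs:
  assumes "first_near V K Us t a \<noteq> first_near V K Us t b"
  shows "\<exists>i<length Us. near V K (Us ! i) a t \<noteq> near V K (Us ! i) b t"
proof (rule ccontr)
  assume "\<not> ?thesis"
  then have "(\<lambda>i. i < length Us \<and> near V K (Us ! i) a t) = (\<lambda>i. i < length Us \<and> near V K (Us ! i) b t)"
    by auto
  then show False using assms by (simp add: first_near_def)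
qed

lemma first_near_is_near:
  assumes "\<exists>i<length Us. near V K (Us ! i) x t"
  shows "first_near V K Us t x < length Us \<and> near V K (Us ! first_near V K Us t x) x t"
  unfolding first_near_def by (rule LeastI_ex) (use assms in blast)

lemma exists_time_card_le_average:
  fixes B :: "nat \<Rightarrow> 'a set"
  assumes "finite S" and "\<And>t. B t \<subseteq> S" and "\<And>a. a \<in> S \<Longrightarrow> card {t\<in>{..T}. a \<in> B t} \<le> m"
  shows "\<exists>\<tau>\<le>T. (T + 1) * card (B \<tau>) \<le> m * card S"
proof -
  have "{a\<in>S. a \<in> B t} = B t" for t using assms(2) by blast
  then have "(\<Sum>t\<le>T. card (B t)) = (\<Sum>a\<in>S. card {t\<in>{..T}. a \<in> B t})"
    using sum_multicount_gen[of "{..T}" S "\<lambda>t a. a \<in> B t"] assms(1) by simp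
  also have "\<dots> \<le> (\<Sum>a\<in>S. m)" by (intro sum_mono assms(3))
  finally have total: "(\<Sum>t\<le>T. card (B t)) \<le> m * card S" by (simp add: mult.commute)
  show ?thesis
  proof (rule ccontr)
    assume "\<not> ?thesis"
    then have "(\<Sum>t\<le>T. m * card S) < (\<Sum>t\<le>T. (T + 1) * card (B t))"
      by (intro sum_strict_mono) auto
    also have "\<dots> = (T + 1) * (\<Sum>t\<le>T. card (B t))" by (simp only: sum_distrib_left)
    also have "\<dots> \<le> (T + 1) * (m * card S)" using total by (rule mult_le_mono2)
    finally show False by simp
  qed
qed

context simplicial_complex
begin

lemma near_mono: "near V K U x t \<Longrightarrow> t \<le> t' \<Longrightarrow> near V K U x t'"
  unfolding near_def using joined_within_mono by blast

lemma AN_cover_mono: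
  assumes "AN_cover V K \<U> M r N" and "M \<le> M'"
  shows "AN_cover V K \<U> M' r N"
  unfolding AN_cover_def using AN_coverD[OF assms(1)] joined_within_mono[OF _ assms(2)] by blast

lemma AN_cover_near:
  assumes "AN_cover V K \<U> M r N" and "x \<in> V"
  obtains U where "U \<in> \<U>" and "\<And>t. near V K U x t"
proof -
  obtain U where "U \<in> \<U>" "x \<in> U" using AN_cover_covers[OF assms] by blast
  then have "near V K U x 0" using joined_within.start[OF assms(2)] unfolding near_def by blast
  then show ?thesis using that[OF \<open>U \<in> \<U>\<close>] near_mono by blast
qed

lemma near_Suc_of_edge: "near V K U y t \<Longrightarrow> {x, y} \<in> K \<Longrightarrow> near V K U x (Suc t)"
  unfolding near_def using joined_within_Cons by blast

lemma entry_time_of_edge: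
  assumes edge: "{x, y} \<in> K" and "near V K U x t \<noteq> near V K U y t"
  shows "near V K U x (Suc t) \<and> (entry_time V K U x = t \<or> entry_time V K U x = Suc t)"
proof (cases "near V K U x t")
  case True
  then have "\<not> near V K U y t" using assms(2) by blast
  have "entry_time V K U x = t"
    unfolding entry_time_def
  proof (rule Least_equality)
    fix t' assume "near V K U x t'"
    then have "near V K U y (Suc t')" using edge near_Suc_of_edge by (simp add: insert_commute)
    then show "t \<le> t'" using \<open>\<not> near V K U y t\<close> near_mono not_less_eq_eq by blast
  qed (fact True)
  then show ?thesis using True near_mono by auto
next
  case False
  then have "near V K U x (Suc t)" using assms near_Suc_of_edge by blast
  moreover have "entry_time V K U x = Suc t"
    unfolding entry_time_def
  proof (rule Least_equality)
    fix t' assume "near V K U x t'"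
    then show "Suc t \<le> t'" using False near_mono not_less_eq_eq by blast
  qed (fact calculation)
  ultimately show ?thesis by blast
qed

lemma card_boundary_times_le:
  assumes "a \<in> S"
  shows "card {t\<in>{..T}. a \<in> boundary_vertices S K (first_near V K Us t)}
           \<le> 2 * card {U\<in>set Us. near V K U a (Suc T)}"
proof -
  define R where "R = {U\<in>set Us. near V K U a (Suc T)}"
  have "{t\<in>{..T}. a \<in> boundary_vertices S K (first_near V K Us t)}
          \<subseteq> (\<Union>U\<in>R. {entry_time V K U a, entry_time V K U a - 1})"
  proof
    fix t assume "t \<in> {t\<in>{..T}. a \<in> boundary_vertices S K (first_near V K Us t)}"
    then have "t \<le> T" and "a \<in> boundary_vertices S K (first_near V K Us t)" by auto
    then obtain b where "{a, b} \<in> K" and differs: "first_near V K Us t a \<noteq> first_near V K Us t b"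
      unfolding boundary_vertices_def by blast
    obtain i where "i < length Us" "near V K (Us ! i) a t \<noteq> near V K (Us ! i) b t"
      using first_near_differs[OF differs] by blast
    then have "near V K (Us ! i) a (Suc t)"
      and entry: "entry_time V K (Us ! i) a = t \<or> entry_time V K (Us ! i) a = Suc t"
      using entry_time_of_edge[OF \<open>{a, b} \<in> K\<close>] by blast+
    then have "Us ! i \<in> R"
      using \<open>i < length Us\<close> \<open>t \<le> T\<close> near_mono[of "Us ! i" a "Suc t" "Suc T"] by (simp add: R_def)
    moreover have "t \<in> {entry_time V K (Us ! i) a, entry_time V K (Us ! i) a - 1}"
      using entry by auto
    ultimately show "t \<in> (\<Union>U\<in>R. {entry_time V K U a, entry_time V K U a - 1})" by blast
  qed
  then have "card {t\<in>{..T}. a \<in> boundary_vertices S K (first_near V K Us t)}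
               \<le> card (\<Union>U\<in>R. {entry_time V K U a, entry_time V K U a - 1})"
    by (intro card_mono) (simp_all add: R_def)
  also have "\<dots> \<le> (\<Sum>U\<in>R. card {entry_time V K U a, entry_time V K U a - 1})"
    by (intro card_UN_le) (simp add: R_def)
  also have "\<dots> \<le> (\<Sum>U\<in>R. 2)"
    by (intro sum_mono) (simp add: card_insert_if)
  finally show ?thesis by (simp add: R_def)
qed

end

context bounded_degree_complex
begin

lemma AN_cover_of_metric_cover:
  assumes cov: "\<Union>\<U> = realisation V K"
    and diam: "\<forall>U\<in>\<U>. \<forall>x\<in>U. \<forall>y\<in>U. nat_metric V K x y \<le> ereal L"
    and mult: "\<forall>x\<in>realisation V K. finite {U\<in>\<U>. \<exists>y\<in>U. nat_metric V K x y < ereal s} \<and>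
                 card {U\<in>\<U>. \<exists>y\<in>U. nat_metric V K x y < ereal s} \<le> N"
    and "real r * sqrt 2 < s"
  defines "g \<equiv> \<lambda>U. {v\<in>V. vertex_point v \<in> U}"
  shows "AN_cover V K (g ` \<U>) (nat \<lceil>2 * (real D + 1) * (L + 1) + 1\<rceil>) r N"
proof -
  define B where "B x = {U\<in>\<U>. \<exists>y\<in>U. nat_metric V K (vertex_point x) y < ereal s}" for x
  have near_subset: "{U'\<in>g ` \<U>. near V K U' x r} \<subseteq> g ` B x" for x
  proof
    fix U' assume "U' \<in> {U'\<in>g ` \<U>. near V K U' x r}"
    then obtain U y where "U \<in> \<U>" "U' = g U" "y \<in> g U" "joined_within V K r x y"
      by (auto simp: near_def)
    then have "nat_metric V K (vertex_point x) (vertex_point y) \<le> ereal (real r * sqrt 2)"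
      by (intro nat_metric_vertex_points_le)
    also have "\<dots> < ereal s" using assms(4) by simp
    finally have "U \<in> B x" using \<open>U \<in> \<U>\<close> \<open>y \<in> g U\<close> by (auto simp: B_def g_def)
    then show "U' \<in> g ` B x" using \<open>U' = g U\<close> by blast
  qed
  have B_finite: "finite (B x)" and B_card: "card (B x) \<le> N" if "x \<in> V" for x
    using mult vertex_point_in_realisation[OF that] unfolding B_def by blast+
  show ?thesis
    unfolding AN_cover_def
  proof (intro conjI ballI)
    fix x assume "x \<in> V"
    then have "vertex_point x \<in> \<Union>\<U>" unfolding cov by (rule vertex_point_in_realisation)
    then show "\<exists>U\<in>g ` \<U>. x \<in> U" using \<open>x \<in> V\<close> by (auto simp: g_def)
  next
    fix U' y y' assume "U' \<in> g ` \<U>" "y \<in> U'" "y' \<in> U'"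
    then obtain U where "U \<in> \<U>" "vertex_point y \<in> U" "vertex_point y' \<in> U" "y \<in> V"
      by (auto simp: g_def)
    then have "nat_metric V K (vertex_point y) (vertex_point y') \<le> ereal L" using diam by blast
    then show "joined_within V K (nat \<lceil>2 * (real D + 1) * (L + 1) + 1\<rceil>) y y'"
      by (rule joined_within_of_nat_metric_le[OF \<open>y \<in> V\<close>])
  next
    fix x assume "x \<in> V"
    then show "finite {U'\<in>g ` \<U>. near V K U' x r}"
      using near_subset B_finite by (meson finite_imageI finite_subset)
  next
    fix x assume "x \<in> V"
    then have "card {U'\<in>g ` \<U>. near V K U' x r} \<le> card (g ` B x)"
      using near_subset B_finite by (intro card_mono) simp_all
    also have "\<dots> \<le> card (B x)" using B_finite[OF \<open>x \<in> V\<close>] by (rule card_image_le)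
    finally show "card {U'\<in>g ` \<U>. near V K U' x r} \<le> N" using B_card[OF \<open>x \<in> V\<close>] by simp
  qed
qed

lemma AN_cover_of_finite_AN_dim:
  assumes "finite_AN_dim (realisation V K) (nat_metric V K)"
  obtains N a b where "\<And>r. \<exists>\<U>. AN_cover V K \<U> (a * r + b) r N"
proof -
  obtain n and c :: real where "c > 0" and AN: "\<forall>s::real. s > 0 \<longrightarrow> (\<exists>\<U>. \<Union>\<U> = realisation V K \<and>
        (\<forall>U\<in>\<U>. \<forall>x\<in>U. \<forall>y\<in>U. nat_metric V K x y \<le> ereal (c * s)) \<and>
        (\<forall>x\<in>realisation V K. finite {U\<in>\<U>. \<exists>y\<in>U. nat_metric V K x y < ereal s} \<and>
                 card {U\<in>\<U>. \<exists>y\<in>U. nat_metric V K x y < ereal s} \<le> n + 1))"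
    using assms unfolding finite_AN_dim_def by (elim exE conjE) (rule that; assumption)
  define a where "a = nat \<lceil>2 * (real D + 1) * c * sqrt 2\<rceil>"
  define b where "b = nat \<lceil>2 * (real D + 1) * (c * sqrt 2 + 1) + 1\<rceil>"
  have "\<exists>\<U>. AN_cover V K \<U> (a * r + b) r (n + 1)" for r
  proof -
    define s where "s = sqrt 2 * (real r + 1)"
    have "s > 0" by (simp add: s_def add_pos_nonneg)
    then obtain \<U> where "\<Union>\<U> = realisation V K"
      and "\<forall>U\<in>\<U>. \<forall>x\<in>U. \<forall>y\<in>U. nat_metric V K x y \<le> ereal (c * s)"
      and "\<forall>x\<in>realisation V K. finite {U\<in>\<U>. \<exists>y\<in>U. nat_metric V K x y < ereal s} \<and>
             card {U\<in>\<U>. \<exists>y\<in>U. nat_metric V K x y < ereal s} \<le> n + 1"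
      using AN[rule_format, OF \<open>s > 0\<close>] by (elim exE conjE) (rule that; assumption)
    moreover have "real r * sqrt 2 < s" by (simp add: s_def algebra_simps)
    ultimately have "AN_cover V K ((\<lambda>U. {v\<in>V. vertex_point v \<in> U}) ` \<U>)
                       (nat \<lceil>2 * (real D + 1) * (c * s + 1) + 1\<rceil>) r (n + 1)"
      by (rule AN_cover_of_metric_cover)
    moreover have "nat \<lceil>2 * (real D + 1) * (c * s + 1) + 1\<rceil> \<le> a * r + b"
    proof -
      have "2 * (real D + 1) * (c * s + 1) + 1
            = 2 * (real D + 1) * c * sqrt 2 * real r + (2 * (real D + 1) * (c * sqrt 2 + 1) + 1)"
        by (simp add: s_def algebra_simps)
      also have "\<dots> \<le> real a * real r + real b"
        unfolding a_def b_def by (intro add_mono mult_right_mono) linarith+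
      finally show ?thesis by (simp only: nat_ceiling_le_eq of_nat_add of_nat_mult)
    qed
    ultimately show ?thesis by (blast intro: AN_cover_mono)
  qed
  then show ?thesis by (rule that)
qed

lemma card_first_near_class_le:
  assumes diam: "\<forall>U\<in>set Us. \<forall>y\<in>U. \<forall>y'\<in>U. joined_within V K M y y'"
    and covered: "\<forall>x\<in>S. \<exists>i<length Us. near V K (Us ! i) x t"
  shows "card {x\<in>S. first_near V K Us t x = k} \<le> (D + 1) ^ (2 * t + M)"
proof (cases "{x\<in>S. first_near V K Us t x = k} = {}")
  case False
  then obtain x0 where "x0 \<in> S" "first_near V K Us t x0 = k" by blast
  then have "k < length Us" and "near V K (Us ! k) x0 t"
    using first_near_is_near[of Us V K x0 t] covered by auto
  then obtain y0 where y0: "y0 \<in> Us ! k" "joined_within V K t x0 y0" by (auto simp: near_def)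
  have "{x\<in>S. first_near V K Us t x = k} \<subseteq> {v. joined_within V K (2 * t + M) x0 v}"
  proof
    fix x assume "x \<in> {x\<in>S. first_near V K Us t x = k}"
    then have "x \<in> S" "first_near V K Us t x = k" by simp_all
    then have "near V K (Us ! k) x t" using first_near_is_near[of Us V K x t] covered by auto
    then obtain y where y: "y \<in> Us ! k" "joined_within V K t x y" by (auto simp: near_def)
    have "joined_within V K M y0 y" using diam nth_mem[OF \<open>k < length Us\<close>] y0(1) y(1) by blast
    then have "joined_within V K (t + M + t) x0 x"
      using joined_within_trans y0(2) joined_within_sym[OF y(2)] by blast
    moreover have "t + M + t = 2 * t + M" by simp
    ultimately show "x \<in> {v. joined_within V K (2 * t + M) x0 v}" by (metis mem_Collect_eq)
  qed
  moreover have "finite {v. joined_within V K (2 * t + M) x0 v}"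
    and "card {v. joined_within V K (2 * t + M) x0 v} \<le> (D + 1) ^ (2 * t + M)"
    using card_joined_within_le by blast+
  ultimately show ?thesis by (meson card_mono order_trans)
qed (metis card.empty le0)

lemma exists_colouring_small_boundary:
  assumes "finite S" and "S \<subseteq> V" and cover: "AN_cover V K \<U> M (Suc T) N"
  shows "\<exists>\<kappa>::'a \<Rightarrow> nat. (\<forall>k. card {x\<in>S. \<kappa> x = k} \<le> (D + 1) ^ (2 * T + M)) \<and>
           (T + 1) * card (boundary_vertices S K \<kappa>) \<le> 2 * N * card S"
proof -
  define R where "R = (\<Union>a\<in>S. {U\<in>\<U>. near V K U a (Suc T)})"
  have "finite R"
    using AN_cover_finite[OF cover] \<open>finite S\<close> \<open>S \<subseteq> V\<close> by (auto simp: R_def)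
  then obtain Us where Us: "set Us = R" using finite_list by blast
  have covered: "\<exists>i<length Us. near V K (Us ! i) x t" if x: "x \<in> S" for x t
  proof -
    obtain U where "U \<in> \<U>" and near: "\<And>t. near V K U x t"
      using AN_cover_near[OF cover] x \<open>S \<subseteq> V\<close> by blast
    then have "U \<in> set Us" using x by (auto simp: Us R_def)
    then show ?thesis using near by (metis in_set_conv_nth)
  qed
  define bd where "bd t = boundary_vertices S K (first_near V K Us t)" for t
  have "card {t\<in>{..T}. a \<in> bd t} \<le> 2 * N" if "a \<in> S" for a
  proof -
    have "{U\<in>set Us. near V K U a (Suc T)} \<subseteq> {U\<in>\<U>. near V K U a (Suc T)}"
      using Us by (auto simp: R_def)
    moreover have "a \<in> V" using that \<open>S \<subseteq> V\<close> by blast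
    ultimately have "card {U\<in>set Us. near V K U a (Suc T)} \<le> N"
      using AN_cover_finite[OF cover] AN_cover_card_le[OF cover] by (meson card_mono order_trans)
    then show ?thesis using card_boundary_times_le[OF that, of T Us] by (simp add: bd_def)
  qed
  moreover have "bd t \<subseteq> S" for t by (auto simp: bd_def boundary_vertices_def)
  ultimately obtain \<tau> where "\<tau> \<le> T" and small_boundary: "(T + 1) * card (bd \<tau>) \<le> 2 * N * card S"
    using exists_time_card_le_average[OF \<open>finite S\<close>, of bd T "2 * N"] by blast
  have "card {x\<in>S. first_near V K Us \<tau> x = k} \<le> (D + 1) ^ (2 * T + M)" for k
  proof -
    have "card {x\<in>S. first_near V K Us \<tau> x = k} \<le> (D + 1) ^ (2 * \<tau> + M)"
      using AN_cover_diameter[OF cover] covered Us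
      by (intro card_first_near_class_le) (auto simp: R_def)
    also have "\<dots> \<le> (D + 1) ^ (2 * T + M)" using \<open>\<tau> \<le> T\<close> by (intro power_increasing) simp_all
    finally show ?thesis .
  qed
  then show ?thesis using small_boundary unfolding bd_def by blast
qed

end

lemma card_boundary_vertices_comp_le:
  assumes "finite W" and "inj_on \<phi> W" and "\<forall>\<sigma>\<in>Z. \<phi> ` \<sigma> \<in> K"
  shows "card (boundary_vertices W Z (\<kappa> \<circ> \<phi>)) \<le> card (boundary_vertices (\<phi> ` W) K \<kappa>)"
proof -
  have "\<phi> ` boundary_vertices W Z (\<kappa> \<circ> \<phi>) \<subseteq> boundary_vertices (\<phi> ` W) K \<kappa>"
  proof
    fix u assume "u \<in> \<phi> ` boundary_vertices W Z (\<kappa> \<circ> \<phi>)"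
    then obtain a b where "u = \<phi> a" "a \<in> W" "b \<in> W" "{a, b} \<in> Z" "\<kappa> (\<phi> a) \<noteq> \<kappa> (\<phi> b)"
      unfolding boundary_vertices_def by auto
    moreover have "\<phi> ` {a, b} \<in> K" using assms(3) \<open>{a, b} \<in> Z\<close> by blast
    ultimately show "u \<in> boundary_vertices (\<phi> ` W) K \<kappa>"
      unfolding boundary_vertices_def by auto
  qed
  moreover have "finite (boundary_vertices (\<phi> ` W) K \<kappa>)"
    using assms(1) by (simp add: boundary_vertices_def)
  moreover have "inj_on \<phi> (boundary_vertices W Z (\<kappa> \<circ> \<phi>))"
    using assms(2) by (rule inj_on_subset) (auto simp: boundary_vertices_def)
  ultimately show ?thesis by (metis card_image card_mono)
qed

lemma card_colour_class_comp:
  assumes "inj_on \<phi> W"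
  shows "card {w\<in>W. (\<kappa> \<circ> \<phi>) w = k} = card {x\<in>\<phi> ` W. \<kappa> x = k}"
proof -
  have "{x\<in>\<phi> ` W. \<kappa> x = k} = \<phi> ` {w\<in>W. (\<kappa> \<circ> \<phi>) w = k}" by auto
  moreover have "inj_on \<phi> {w\<in>W. (\<kappa> \<circ> \<phi>) w = k}" using assms by (rule inj_on_subset) blast
  ultimately show ?thesis by (simp add: card_image)
qed

lemma real_Sup_nat_le:
  fixes A :: "nat set"
  assumes "\<And>n. n \<in> A \<Longrightarrow> real n \<le> B" and "0 \<le> B"
  shows "real (Sup A) \<le> B"
proof (cases "A = {}")
  case False
  have "A \<subseteq> {..nat \<lfloor>B\<rfloor>}"
  proof
    fix n assume "n \<in> A"
    then show "n \<in> {..nat \<lfloor>B\<rfloor>}" using assms(1) le_nat_floor by simp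
  qed
  then have "finite A" by (rule finite_subset) simp
  then have "Sup A \<in> A" using False by (simp add: Sup_nat_def)
  then show ?thesis by (rule assms(1))
qed (simp add: Sup_nat_def assms(2))

lemma real_s_TO_X_le:
  fixes V :: "'a set"
  assumes "\<And>(W :: 'a set) Z. finite W \<Longrightarrow> card W \<le> r \<Longrightarrow> subcomplex_le W Z V K \<Longrightarrow> real (s_TO q W Z) \<le> B"
    and "0 \<le> B"
  shows "real (s_TO_X q V K r) \<le> B"
  unfolding s_TO_X_def
proof (rule real_Sup_nat_le)
  fix n assume "n \<in> {s_TO q W Z | (W :: 'a set) Z. finite W \<and> card W \<le> r \<and> subcomplex_le W Z V K}"
  then obtain W :: "'a set" and Z where "n = s_TO q W Z" "finite W" "card W \<le> r" "subcomplex_le W Z V K"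
    by blast
  then show "real n \<le> B" using assms(1) by simp
qed (fact assms(2))

context bounded_degree_complex
begin

lemma card_neighbours_subcomplex_le:
  assumes "subcomplex_le W Z V K" and "a \<in> W"
  shows "card (neighbours Z a) \<le> D"
proof -
  obtain \<phi> where inj: "inj_on \<phi> W" and "\<phi> ` W \<subseteq> V" and hom: "\<forall>\<sigma>\<in>Z. \<phi> ` \<sigma> \<in> K"
    using assms(1) unfolding subcomplex_le_def by blast
  interpret Z: simplicial_complex W Z
    using assms(1) by unfold_locales (simp add: subcomplex_le_def)
  have "neighbours Z a \<subseteq> W" using Z.edge_vertices by (auto simp: neighbours_def)
  have "\<phi> ` neighbours Z a \<subseteq> neighbours K (\<phi> a)"
  proof
    fix u assume "u \<in> \<phi> ` neighbours Z a"
    then obtain b where b: "b \<in> neighbours Z a" "u = \<phi> b" by blast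
    then have "\<phi> ` {a, b} \<in> K" using hom by (auto simp: neighbours_def)
    moreover have "\<phi> b \<noteq> \<phi> a"
      using b \<open>neighbours Z a \<subseteq> W\<close> assms(2) inj by (auto simp: neighbours_def inj_on_def)
    ultimately show "u \<in> neighbours K (\<phi> a)" using b by (simp add: neighbours_def)
  qed
  moreover have "\<phi> a \<in> V" using \<open>\<phi> ` W \<subseteq> V\<close> assms(2) by blast
  ultimately have "card (\<phi> ` neighbours Z a) \<le> D"
    using finite_neighbours card_neighbours_le by (meson card_mono order_trans)
  moreover have "card (\<phi> ` neighbours Z a) = card (neighbours Z a)"
    using inj_on_subset[OF inj \<open>neighbours Z a \<subseteq> W\<close>] by (rule card_image)
  ultimately show ?thesis by simp
qed

lemma s_TO_subcomplex_le:
  assumes "finite W" and "card W \<le> r" and sub: "subcomplex_le W Z V K"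
    and cover: "AN_cover V K \<U> M (Suc T) N"
  shows "real (s_TO TYPE('q::finite) W Z)
           \<le> 2 ^ (D + 1) * ((real D + 1) ^ (2 * T + M) + 2 * real N * real r / (real T + 1))"
proof -
  obtain \<phi> where inj: "inj_on \<phi> W" and "\<phi> ` W \<subseteq> V" and hom: "\<forall>\<sigma>\<in>Z. \<phi> ` \<sigma> \<in> K"
    using sub unfolding subcomplex_le_def by blast
  interpret Z: simplicial_complex W Z
    using sub by unfold_locales (simp add: subcomplex_le_def)
  obtain \<kappa> :: "'a \<Rightarrow> nat" where classes: "\<And>k. card {x\<in>\<phi> ` W. \<kappa> x = k} \<le> (D + 1) ^ (2 * T + M)"
    and boundary: "(T + 1) * card (boundary_vertices (\<phi> ` W) K \<kappa>) \<le> 2 * N * card (\<phi> ` W)"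
    using exists_colouring_small_boundary[OF finite_imageI[OF \<open>finite W\<close>] \<open>\<phi> ` W \<subseteq> V\<close> cover] by blast
  define nb where "nb = card (boundary_vertices W Z (\<kappa> \<circ> \<phi>))"
  have "s_TO TYPE('q) W Z \<le> 2 ^ (D + 1) * ((D + 1) ^ (2 * T + M) + nb)"
    unfolding nb_def
  proof (rule Z.s_TO_le_colouring)
    show "card (neighbours Z a) \<le> D" if "a \<in> W" for a
      using card_neighbours_subcomplex_le[OF sub that] .
    show "card {w\<in>W. (\<kappa> \<circ> \<phi>) w = k} \<le> (D + 1) ^ (2 * T + M)" for k
      using classes[of k] card_colour_class_comp[OF inj, of \<kappa> k] by simp
  qed (fact \<open>finite W\<close>)
  then have "real (s_TO TYPE('q) W Z) \<le> real (2 ^ (D + 1) * ((D + 1) ^ (2 * T + M) + nb))"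
    by (rule of_nat_mono)
  then have s_TO_le: "real (s_TO TYPE('q) W Z) \<le> 2 ^ (D + 1) * ((real D + 1) ^ (2 * T + M) + real nb)"
    unfolding of_nat_mult of_nat_add of_nat_power by simp
  have "(T + 1) * nb \<le> (T + 1) * card (boundary_vertices (\<phi> ` W) K \<kappa>)"
    unfolding nb_def using card_boundary_vertices_comp_le[OF \<open>finite W\<close> inj hom]
    by (rule mult_le_mono2)
  also have "\<dots> \<le> 2 * N * card W" using boundary card_image[OF inj] by simp
  also have "\<dots> \<le> 2 * N * r" using \<open>card W \<le> r\<close> by simp
  finally have "real ((T + 1) * nb) \<le> real (2 * N * r)" by (rule of_nat_mono)
  then have "real nb * (real T + 1) \<le> 2 * real N * real r" by (simp add: algebra_simps)
  then have "real nb \<le> 2 * real N * real r / (real T + 1)" by (simp add: pos_le_divide_eq)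
  then have "2 ^ (D + 1) * ((real D + 1) ^ (2 * T + M) + real nb)
      \<le> 2 ^ (D + 1) * ((real D + 1) ^ (2 * T + M) + 2 * real N * real r / (real T + 1))"
    by (intro mult_left_mono add_left_mono) simp_all
  with s_TO_le show ?thesis by linarith
qed

end

section \<open>The logarithmic trade-off\<close>

lemma sqrt_le_log_ratio: "sqrt (1 + real r) \<le> 2 * (real r / ln (1 + real r)) + 2 / ln 2"
proof (cases "r = 0")
  case True
  have "ln (2::real) \<le> 2 - 1" by (rule ln_le_minus_one) simp
  then have "1 \<le> 2 / ln (2::real)" by (simp add: divide_simps)
  then show ?thesis using True by simp
next
  case False
  define x where "x = 1 + real r"
  have "x \<ge> 2" using False by (simp add: x_def)
  then have "ln x > 0" by simp
  have "ln (sqrt x) \<le> sqrt x - 1" using \<open>x \<ge> 2\<close> by (intro ln_le_minus_one) simp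
  then have "ln x \<le> 2 * sqrt x" using ln_sqrt[of x] \<open>x \<ge> 2\<close> by simp
  then have "sqrt x * ln x \<le> sqrt x * (2 * sqrt x)" using \<open>x \<ge> 2\<close> by (intro mult_left_mono) simp_all
  also have "\<dots> = 2 * x" using \<open>x \<ge> 2\<close> by simp
  finally have "sqrt x * ln x \<le> 2 * x" .
  then have "sqrt x \<le> 2 * x / ln x" using \<open>ln x > 0\<close> by (simp add: pos_le_divide_eq)
  also have "\<dots> = 2 * (real r / ln x) + 2 / ln x" by (simp add: x_def add_divide_distrib)
  also have "2 / ln x \<le> 2 / ln 2" using \<open>x \<ge> 2\<close> \<open>ln x > 0\<close> by (intro divide_left_mono) simp_all
  finally show ?thesis by (simp add: x_def)
qed

lemma log_ratio_le_scaled: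
  assumes "1 \<le> C"
  shows "real r / ln (1 + real r) \<le> real C * real r / ln (1 + real C * real r)"
proof (cases "r = 0")
  case False
  have "1 + real C * real r \<le> (1 + real r) ^ C" using Bernoulli_inequality[of "real r" C] by simp
  then have "ln (1 + real C * real r) \<le> ln ((1 + real r) ^ C)" by (rule ln_mono) (simp add: add_pos_nonneg)
  also have "\<dots> = real C * ln (1 + real r)" by (simp add: ln_realpow)
  finally have "real r * ln (1 + real C * real r) \<le> real r * (real C * ln (1 + real r))"
    by (intro mult_left_mono) simp_all
  moreover have "0 < real C * real r" using False assms by simp
  then have "ln (1 + real r) > 0" "ln (1 + real C * real r) > 0" using False by (simp_all add: ln_gt_zero)
  ultimately show ?thesis by (simp add: divide_simps mult.commute mult.left_commute)
qed simp

lemma power_le_sqrt_of_le_ln: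
  fixes \<beta> x :: real
  assumes "1 \<le> \<beta>" and "0 \<le> x" and "real n * ln \<beta> \<le> ln (1 + x) / 2"
  shows "\<beta> ^ n \<le> sqrt (1 + x)"
proof -
  have "\<beta> ^ n = exp (real n * ln \<beta>)" using assms(1) by (simp add: exp_of_nat_mult)
  also have "\<dots> \<le> exp (ln (1 + x) / 2)" using assms(3) by simp
  also have "\<dots> = sqrt (1 + x)" using assms(2) by (simp add: powr_half_sqrt[symmetric] powr_def)
  finally show ?thesis .
qed

text \<open>With this \<open>T\<close> one has \<open>\<beta>^(\<alpha> T) \<le> \<surd>(1 + r)\<close> and \<open>r / (T + 1) \<le> r / (\<epsilon> ln (1 + r))\<close>,
  and both bounds are \<open>O(r / ln r)\<close>.\<close>
lemma log_scale_bound: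
  fixes \<beta> c \<epsilon> :: real and \<alpha> \<gamma> r :: nat
  assumes "1 \<le> \<beta>" and "0 \<le> c" and "0 < \<epsilon>" and \<epsilon>_small: "real \<alpha> * ln \<beta> * \<epsilon> \<le> 1 / 2"
  defines "T \<equiv> nat \<lfloor>\<epsilon> * ln (1 + real r)\<rfloor>"
  shows "\<beta> ^ (\<alpha> * T + \<gamma>) + c * real r / (real T + 1)
           \<le> (2 * \<beta> ^ \<gamma> + c / \<epsilon>) * (real r / ln (1 + real r)) + 2 * \<beta> ^ \<gamma> / ln 2"
proof -
  define G where "G = real r / ln (1 + real r)"
  have "0 \<le> ln \<beta>" using assms(1) by simp
  have "0 \<le> \<epsilon> * ln (1 + real r)" using \<open>0 < \<epsilon>\<close> by simp
  then have T_le: "real T \<le> \<epsilon> * ln (1 + real r)" and T_gt: "\<epsilon> * ln (1 + real r) < real T + 1"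
    unfolding T_def by linarith+
  have "real (\<alpha> * T) * ln \<beta> = real \<alpha> * ln \<beta> * real T" by simp
  also have "\<dots> \<le> real \<alpha> * ln \<beta> * (\<epsilon> * ln (1 + real r))"
    using T_le \<open>0 \<le> ln \<beta>\<close> by (intro mult_left_mono) simp_all
  also have "\<dots> = (real \<alpha> * ln \<beta> * \<epsilon>) * ln (1 + real r)" by simp
  also have "\<dots> \<le> 1 / 2 * ln (1 + real r)"
    using \<epsilon>_small by (intro mult_right_mono) simp_all
  finally have "\<beta> ^ (\<alpha> * T) \<le> sqrt (1 + real r)"
    by (intro power_le_sqrt_of_le_ln assms(1)) simp_all
  then have "\<beta> ^ (\<alpha> * T + \<gamma>) \<le> \<beta> ^ \<gamma> * (2 * G + 2 / ln 2)"
    using sqrt_le_log_ratio[of r] assms(1)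
    by (simp add: power_add G_def mult.commute mult_left_mono order_trans)
  moreover have "c * real r / (real T + 1) \<le> c / \<epsilon> * G"
  proof (cases "r = 0")
    case False
    then have "0 < \<epsilon> * ln (1 + real r)" using \<open>\<epsilon> > 0\<close> by simp
    then have "real r / (real T + 1) \<le> real r / (\<epsilon> * ln (1 + real r))"
      using T_gt by (intro divide_left_mono) simp_all
    then have "c * (real r / (real T + 1)) \<le> c * (real r / (\<epsilon> * ln (1 + real r)))"
      using assms(2) by (rule mult_left_mono)
    then show ?thesis by (simp add: G_def)
  qed (simp add: G_def)
  ultimately show ?thesis
    by (simp add: G_def algebra_simps add_divide_distrib)
qed

lemma exists_scale_log_ratio:
  fixes \<beta> c :: real and \<alpha> \<gamma> :: nat
  assumes "1 \<le> \<beta>" and "0 \<le> c"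
  obtains A B where "0 \<le> A" and "0 \<le> B" and "\<And>r::nat. \<exists>T::nat.
    \<beta> ^ (\<alpha> * T + \<gamma>) + c * real r / (real T + 1) \<le> A * (real r / ln (1 + real r)) + B"
proof
  define \<epsilon> where "\<epsilon> = 1 / (2 * real \<alpha> * ln \<beta> + 1)"
  have "0 \<le> ln \<beta>" using assms(1) by simp
  then have "0 < 2 * real \<alpha> * ln \<beta> + 1" by (simp add: add_nonneg_pos)
  then have "0 < \<epsilon>" and "real \<alpha> * ln \<beta> * \<epsilon> \<le> 1 / 2" by (simp_all add: \<epsilon>_def field_simps)
  then show "\<exists>T::nat. \<beta> ^ (\<alpha> * T + \<gamma>) + c * real r / (real T + 1)
               \<le> (2 * \<beta> ^ \<gamma> + c / \<epsilon>) * (real r / ln (1 + real r)) + 2 * \<beta> ^ \<gamma> / ln 2" for r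
    using log_scale_bound[OF assms] by blast
  show "0 \<le> 2 * \<beta> ^ \<gamma> + c / \<epsilon>" "0 \<le> 2 * \<beta> ^ \<gamma> / ln 2"
    using assms \<open>0 < \<epsilon>\<close> by simp_all
qed

lemma exists_log_ratio_bound:
  fixes x :: "nat \<Rightarrow> real"
  assumes "0 \<le> A" and "\<And>r. x r \<le> A * (real r / ln (1 + real r)) + B"
  shows "\<exists>C. \<forall>r. x r \<le> C * (C * real r / ln (1 + C * real r)) + C"
proof -
  define C where "C = nat \<lceil>max A B\<rceil> + 1"
  have "A \<le> real C" "B \<le> real C" by (simp_all add: C_def) linarith+
  have "x r \<le> real C * (real C * real r / ln (1 + real C * real r)) + real C" for r
  proof -
    have "0 \<le> real r / ln (1 + real r)" by simp
    have "x r \<le> A * (real r / ln (1 + real r)) + B" by (fact assms(2))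
    also have "\<dots> \<le> real C * (real r / ln (1 + real r)) + real C"
      using \<open>A \<le> real C\<close> \<open>B \<le> real C\<close> \<open>0 \<le> real r / ln (1 + real r)\<close>
      by (intro add_mono mult_right_mono)
    also have "\<dots> \<le> real C * (real C * real r / ln (1 + real C * real r)) + real C"
      using log_ratio_le_scaled[of C r] by (intro add_right_mono mult_left_mono) (simp_all add: C_def)
    finally show ?thesis .
  qed
  then show ?thesis by blast
qed

context bounded_degree_complex
begin

lemma s_TO_X_log_ratio_bound:
  assumes "finite_AN_dim (realisation V K) (nat_metric V K)"
  obtains A B where "0 \<le> A"
    and "\<And>r. real (s_TO_X TYPE('q::finite) V K r) \<le> A * (real r / ln (1 + real r)) + B"
proof -
  obtain N a b where cover: "\<And>r. \<exists>\<U>. AN_cover V K \<U> (a * r + b) r N"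
    using AN_cover_of_finite_AN_dim[OF assms] by blast
  obtain A B where "0 \<le> A" "0 \<le> B" and tradeoff: "\<And>r. \<exists>T.
      (real D + 1) ^ ((a + 2) * T + (a + b)) + 2 * real N * real r / (real T + 1)
        \<le> A * (real r / ln (1 + real r)) + B"
    using exists_scale_log_ratio[where \<beta> = "real D + 1" and c = "2 * real N" and \<alpha> = "a + 2"
        and \<gamma> = "a + b"] by auto
  have bound: "real (s_TO_X TYPE('q) V K r)
      \<le> 2 ^ (D + 1) * A * (real r / ln (1 + real r)) + 2 ^ (D + 1) * B" for r
  proof (rule real_s_TO_X_le)
    fix W Z assume W: "finite W" "card W \<le> r" "subcomplex_le W Z V K"
    obtain T where T: "(real D + 1) ^ ((a + 2) * T + (a + b)) + 2 * real N * real r / (real T + 1)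
        \<le> A * (real r / ln (1 + real r)) + B"
      using tradeoff by blast
    obtain \<U> where "AN_cover V K \<U> (a * Suc T + b) (Suc T) N" using cover by blast
    then have "real (s_TO TYPE('q) W Z) \<le> 2 ^ (D + 1) *
        ((real D + 1) ^ (2 * T + (a * Suc T + b)) + 2 * real N * real r / (real T + 1))"
      using s_TO_subcomplex_le[OF W] by blast
    also have "2 * T + (a * Suc T + b) = (a + 2) * T + (a + b)" by (simp add: algebra_simps)
    finally show "real (s_TO TYPE('q) W Z) \<le> 2 ^ (D + 1) * A * (real r / ln (1 + real r)) + 2 ^ (D + 1) * B"
      using mult_left_mono[OF T, of "2 ^ (D + 1)"] by (simp add: algebra_simps)
  qed (use \<open>0 \<le> A\<close> \<open>0 \<le> B\<close> in simp)
  show ?thesis using that[OF _ bound] \<open>0 \<le> A\<close> by simp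
qed

end

theorem corollary1p16:
  fixes V :: "'a set" and K :: "'a set set"
  assumes "abs_simplicial_complex V K"
    and "bounded_degree V K"
    and "finite_AN_dim (realisation V K) (nat_metric V K)"
  shows "\<exists>C::real. \<forall>r::nat.
           real (s_TO_X TYPE('q::finite) V K r) \<le> C * ((C * real r) / ln (1 + C * real r)) + C"
proof -
  obtain D where "\<forall>s\<in>V. finite (neighbours K s) \<and> card (neighbours K s) \<le> D"
    using assms(2) unfolding bounded_degree_def neighbours_def by blast
  then interpret bounded_degree_complex V K D
    using assms(1) by unfold_locales blast+
  obtain A B where "0 \<le> A"
    and "\<And>r. real (s_TO_X TYPE('q) V K r) \<le> A * (real r / ln (1 + real r)) + B"
    using s_TO_X_log_ratio_bound[OF assms(3)] by blast
  then show ?thesis by (rule exists_log_ratio_bound)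
qed

end
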